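(* Let $\mathbf F$ be a nonincreasing foliage tree and $\varphi$ a consistent family of foliage grafts for $\mathbf F$ such that $\mathrm{fhybr}(\mathbf F,\varphi)$ has nonempty leaves and each $\mathbf G\in\varphi$ preserves shoots of $\mathbf F$. Then $\mathrm{fhybr}(\mathbf F,\varphi)$ shoots into $\mathbf F$.
   Context: Trees: a tree is a pair $(Q,<)$ with $<$ irreflexive transitive and predecessor sets well-ordered; $\parallel$ = incomparable; $\mathrm{sons}(x)$ = immediate successors; $\max$ = maximal nodes; $0$ = least node; $A{\downarrow}=\{v:\exists a\in A\ a\le v\}$; for an antichain $A$ and $x\in A{\downarrow}$, $\mathrm{root}(x,A)$ is the unique $r\in A$ with $r\le x$. A graft for a tree $\mathcal T$ is a tree $\mathcal G$ with more than one node, least node $0_{\mathcal G}\in\mathrm{nodes}\,\mathcal T$, $\max\mathcal G\subseteq\{v\in\mathrm{nodes}\,\mathcal T:v>_{\mathcal T}0_{\mathcal G}\}$ an antichain in $\mathcal T$, and $\mathrm{impl}\,\mathcal G:=\mathrm{nodes}\,\mathcal G\setminus(\{0_{\mathcal G}\}\cup\max\mathcal G)$ disjoint from $\mathrm{nodes}\,\mathcal T$; $\mathrm{expl}(\mathcal T,\mathcal G)=\{v:v>_{\mathcal T}0_{\mathcal G}\}\setminus(\max\mathcal G){\downarrow}_{\mathcal T}$. A consistent family $\gamma$ of grafts for $\mathcal T$: members are grafts with pairwise disjoint implants, and for distinct $\mathcal D,\mathcal E$: $0_{\mathcal D}\parallel_{\mathcal T}0_{\mathcal E}$ or $0_{\mathcal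 D}\in(\max\mathcal E){\downarrow}_{\mathcal T}$ or $0_{\mathcal E}\in(\max\mathcal D){\downarrow}_{\mathcal T}$. $\mathrm{supp}(\mathcal T,\gamma)=\mathrm{nodes}\,\mathcal T\setminus\bigcup_{\mathcal G\in\gamma}\mathrm{expl}(\mathcal T,\mathcal G)$. $\mathrm{hybr}(\mathcal T,\gamma)$ is the tree on $\mathrm{supp}(\mathcal T,\gamma)\cup\bigcup_{\mathcal G\in\gamma}\mathrm{impl}\,\mathcal G$ with $x<y$ iff: (b1) $x,y\in\mathrm{supp}$, $x<_{\mathcal T}y$; (b2) $x,y\in\mathrm{impl}\,\mathcal G$, $x<_{\mathcal G}y$; (b3) $x\in\mathrm{supp}$, $y\in\mathrm{impl}\,\mathcal G$, $x\le_{\mathcal T}0_{\mathcal G}$; (b4) $x\in\mathrm{impl}\,\mathcal G$, $y\in\mathrm{supp}\cap(\max\mathcal G){\downarrow}_{\mathcal T}$, $x<_{\mathcal G}\mathrm{root}_{\mathcal T}(y,\max\mathcal G)$; or (b5) $x\in\mathrm{impl}\,\mathcal D$, $y\in\mathrm{impl}\,\mathcal E$ ($\mathcal D\ne\mathcal E$), $0_{\mathcal E}\in(\max\mathcal D){\downarrow}_{\mathcal T}$, $x<_{\mathcal D}\mathrm{root}_{\mathcal T}(0_{\mathcal E},\max\mathcal D)$. Foliage trees: $\mathbf F=(\mathcal T,l)$ with skeleton $\mathcal T$ and leaves $\mathbf F_x=l(x)$; nonincreasing: $x\le y\Rightarrow\mathbf F_y\subseteq\mathbf F_x$; nonempty leaves: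 every leaf nonempty; $\mathrm{flesh}\,\mathbf F=\bigcup_x\mathbf F_x$; $\mathrm{shoot}_{\mathbf F}(z)=\{\bigcup_{s\in C}\mathbf F_s:C$ cofinite subset of $\mathrm{sons}(z)\}$; $\mathrm{scope}_{\mathbf F}(p)=\{y:p\in\mathbf F_y\}$; $\gamma\gg\delta$ means every nonempty $D\in\delta$ contains some nonempty $G\in\gamma$. A foliage graft for nonincreasing $\mathbf F$ is a nonincreasing foliage tree $\mathbf G$ with skeleton a graft for the skeleton of $\mathbf F$, $\mathbf G_{0_{\mathbf G}}\subseteq\mathbf F_{0_{\mathbf G}}$, and $\mathbf G_m=\mathbf F_m$ for $m\in\max\mathbf G$; $\mathrm{cut}(\mathbf F,\mathbf G)=\mathbf F_{0_{\mathbf G}}\setminus\mathbf G_{0_{\mathbf G}}$; $\mathrm{impl}\,\mathbf G$, $\mathrm{expl}(\mathbf F,\mathbf G)$ refer to skeletons. $\varphi$ is a consistent family of foliage grafts for $\mathbf F$ if its members are foliage grafts for $\mathbf F$ with pairwise distinct skeletons forming a consistent family of grafts for the skeleton of $\mathbf F$; $\mathrm{loss}(\mathbf F,\varphi)=\bigcup_{\mathbf G\in\varphi}\mathrm{cut}(\mathbf F,\mathbf G)$; $\mathrm{supp}(\mathbf F,\varphi)$ is the support of the skeleton of $\mathbf F$ for the family of skeletons. $\mathrm{fhybr}(\mathbf F,\varphi)$ is the foliage tree $\mathbf H$ whose skeleton is the hybrid of the skeleton of $\mathbf F$ and the skeletons of members of $\varphi$, with leaves $\mathbf H_x=\mathbf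 G_x\setminus\mathrm{loss}(\mathbf F,\varphi)$ if $x\in\mathrm{impl}\,\mathbf G$, $\mathbf G\in\varphi$, and $\mathbf H_x=\mathbf F_x\setminus\mathrm{loss}(\mathbf F,\varphi)$ if $x\in\mathrm{supp}(\mathbf F,\varphi)$. A foliage graft $\mathbf G$ preserves shoots of $\mathbf F$ iff for each $p\in\mathrm{flesh}\,\mathbf G$ and each $y\in\mathrm{scope}_{\mathbf F}(p)\cap(\{0_{\mathbf G}\}\cup\mathrm{expl}(\mathbf F,\mathbf G))$ there is $x\in\mathrm{scope}_{\mathbf G}(p)\cap(\{0_{\mathbf G}\}\cup\mathrm{impl}\,\mathbf G)$ with $\mathrm{shoot}_{\mathbf G}(x)\gg\mathrm{shoot}_{\mathbf F}(y)$. $\mathbf H$ shoots into $\mathbf F$ iff for every $p\in\mathrm{flesh}\,\mathbf H$ and every $y\in\mathrm{scope}_{\mathbf F}(p)$ there is $x\in\mathrm{scope}_{\mathbf H}(p)$ with $\mathrm{shoot}_{\mathbf H}(x)\gg\mathrm{shoot}_{\mathbf F}(y)$. *)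

theory Defs
  imports Main
begin

text \<open>A tree is a pair (set of nodes, strict order relation). Nodes of all trees
involved live in one common type 'a, so that grafts and hybrids can be formed.\<close>

type_synonym 'a tree = "'a set \<times> ('a \<Rightarrow> 'a \<Rightarrow> bool)"

definition nodes :: "'a tree \<Rightarrow> 'a set" where
  "nodes T = fst T"

definition tlt :: "'a tree \<Rightarrow> 'a \<Rightarrow> 'a \<Rightarrow> bool" where
  "tlt T = snd T"

definition tle :: "'a tree \<Rightarrow> 'a \<Rightarrow> 'a \<Rightarrow> bool" where
  "tle T x y \<longleftrightarrow> tlt T x y \<or> x = y"

definition tpar :: "'a tree \<Rightarrow> 'a \<Rightarrow> 'a \<Rightarrow> bool" where
  "tpar T x y \<longleftrightarrow> \<not> tle T x y \<and> \<not> tle T y x"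

definition is_tree :: "'a tree \<Rightarrow> bool" where
  "is_tree T \<longleftrightarrow>
     (\<forall>x y. tlt T x y \<longrightarrow> x \<in> nodes T \<and> y \<in> nodes T) \<and>
     (\<forall>x. \<not> tlt T x x) \<and>
     (\<forall>x y z. tlt T x y \<longrightarrow> tlt T y z \<longrightarrow> tlt T x z) \<and>
     (\<forall>x \<in> nodes T.
        (\<forall>y z. tlt T y x \<longrightarrow> tlt T z x \<longrightarrow> tlt T y z \<or> y = z \<or> tlt T z y) \<and>
        wf {(y, z). tlt T y z \<and> tlt T z x})"

definition sons :: "'a tree \<Rightarrow> 'a \<Rightarrow> 'a set" where
  "sons T z = {s \<in> nodes T. tlt T z s \<and> \<not> (\<exists>w. tlt T z w \<and> tlt T w s)}"

definition maxs :: "'a tree \<Rightarrow> 'a set" where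
  "maxs T = {x \<in> nodes T. \<not> (\<exists>y. tlt T x y)}"

definition has_least :: "'a tree \<Rightarrow> bool" where
  "has_least T \<longleftrightarrow> (\<exists>r \<in> nodes T. \<forall>x \<in> nodes T. tle T r x)"

definition zero :: "'a tree \<Rightarrow> 'a" where
  "zero T = (THE r. r \<in> nodes T \<and> (\<forall>x \<in> nodes T. tle T r x))"

definition down :: "'a tree \<Rightarrow> 'a set \<Rightarrow> 'a set" where
  "down T A = {v \<in> nodes T. \<exists>a \<in> A. tle T a v}"

definition root :: "'a tree \<Rightarrow> 'a \<Rightarrow> 'a set \<Rightarrow> 'a" where
  "root T x A = (THE r. r \<in> A \<and> tle T r x)"

definition antichain :: "'a tree \<Rightarrow> 'a set \<Rightarrow> bool" where
  "antichain T A \<longleftrightarrow> A \<subseteq> nodes T \<and> (\<forall>a \<in> A. \<forall>b \<in> A. a \<noteq> b \<longrightarrow> tpar T a b)"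

definition impl :: "'a tree \<Rightarrow> 'a set" where
  "impl G = nodes G - ({zero G} \<union> maxs G)"

definition is_graft :: "'a tree \<Rightarrow> 'a tree \<Rightarrow> bool" where
  "is_graft T G \<longleftrightarrow> is_tree G \<and> (\<exists>x \<in> nodes G. \<exists>y \<in> nodes G. x \<noteq> y) \<and>
     has_least G \<and> zero G \<in> nodes T \<and>
     maxs G \<subseteq> {v \<in> nodes T. tlt T (zero G) v} \<and> antichain T (maxs G) \<and>
     impl G \<inter> nodes T = {}"

definition expl :: "'a tree \<Rightarrow> 'a tree \<Rightarrow> 'a set" where
  "expl T G = {v \<in> nodes T. tlt T (zero G) v} - down T (maxs G)"

definition consistent_grafts :: "'a tree \<Rightarrow> 'a tree set \<Rightarrow> bool" where
  "consistent_grafts T \<gamma> \<longleftrightarrow> (\<forall>G \<in> \<gamma>. is_graft T G) \<and>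
     (\<forall>D \<in> \<gamma>. \<forall>E \<in> \<gamma>. D \<noteq> E \<longrightarrow>
        impl D \<inter> impl E = {} \<and>
        (tpar T (zero D) (zero E) \<or> zero D \<in> down T (maxs E) \<or> zero E \<in> down T (maxs D)))"

definition supp :: "'a tree \<Rightarrow> 'a tree set \<Rightarrow> 'a set" where
  "supp T \<gamma> = nodes T - (\<Union>G \<in> \<gamma>. expl T G)"

definition hybr_lt :: "'a tree \<Rightarrow> 'a tree set \<Rightarrow> 'a \<Rightarrow> 'a \<Rightarrow> bool" where
  "hybr_lt T \<gamma> x y \<longleftrightarrow>
     (x \<in> supp T \<gamma> \<and> y \<in> supp T \<gamma> \<and> tlt T x y) \<or>
     (\<exists>G \<in> \<gamma>. x \<in> impl G \<and> y \<in> impl G \<and> tlt G x y) \<or>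
     (\<exists>G \<in> \<gamma>. x \<in> supp T \<gamma> \<and> y \<in> impl G \<and> tle T x (zero G)) \<or>
     (\<exists>G \<in> \<gamma>. x \<in> impl G \<and> y \<in> supp T \<gamma> \<inter> down T (maxs G) \<and>
        tlt G x (root T y (maxs G))) \<or>
     (\<exists>D \<in> \<gamma>. \<exists>E \<in> \<gamma>. D \<noteq> E \<and> x \<in> impl D \<and> y \<in> impl E \<and>
        zero E \<in> down T (maxs D) \<and> tlt D x (root T (zero E) (maxs D)))"

definition hybr :: "'a tree \<Rightarrow> 'a tree set \<Rightarrow> 'a tree" where
  "hybr T \<gamma> = (supp T \<gamma> \<union> (\<Union>G \<in> \<gamma>. impl G), hybr_lt T \<gamma>)"

type_synonym ('a, 'b) ftree = "'a tree \<times> ('a \<Rightarrow> 'b set)"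

definition skel :: "('a, 'b) ftree \<Rightarrow> 'a tree" where
  "skel F = fst F"

definition leaf :: "('a, 'b) ftree \<Rightarrow> 'a \<Rightarrow> 'b set" where
  "leaf F = snd F"

definition is_ftree :: "('a, 'b) ftree \<Rightarrow> bool" where
  "is_ftree F \<longleftrightarrow> is_tree (skel F)"

definition nonincreasing :: "('a, 'b) ftree \<Rightarrow> bool" where
  "nonincreasing F \<longleftrightarrow> is_ftree F \<and>
     (\<forall>x \<in> nodes (skel F). \<forall>y \<in> nodes (skel F). tle (skel F) x y \<longrightarrow> leaf F y \<subseteq> leaf F x)"

definition nonempty_leaves :: "('a, 'b) ftree \<Rightarrow> bool" where
  "nonempty_leaves F \<longleftrightarrow> (\<forall>x \<in> nodes (skel F). leaf F x \<noteq> {})"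

definition flesh :: "('a, 'b) ftree \<Rightarrow> 'b set" where
  "flesh F = (\<Union>x \<in> nodes (skel F). leaf F x)"

definition shoot :: "('a, 'b) ftree \<Rightarrow> 'a \<Rightarrow> 'b set set" where
  "shoot F z = {(\<Union>s \<in> C. leaf F s) | C. C \<subseteq> sons (skel F) z \<and> finite (sons (skel F) z - C)}"

definition scope :: "('a, 'b) ftree \<Rightarrow> 'b \<Rightarrow> 'a set" where
  "scope F p = {y \<in> nodes (skel F). p \<in> leaf F y}"

definition gg :: "'b set set \<Rightarrow> 'b set set \<Rightarrow> bool" (infix "\<ggreater>" 50) where
  "\<gamma> \<ggreater> \<delta> \<longleftrightarrow> (\<forall>D \<in> \<delta>. D \<noteq> {} \<longrightarrow> (\<exists>G \<in> \<gamma>. G \<noteq> {} \<and> G \<subseteq> D))"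

definition is_fgraft :: "('a, 'b) ftree \<Rightarrow> ('a, 'b) ftree \<Rightarrow> bool" where
  "is_fgraft F G \<longleftrightarrow> nonincreasing G \<and> is_graft (skel F) (skel G) \<and>
     leaf G (zero (skel G)) \<subseteq> leaf F (zero (skel G)) \<and>
     (\<forall>m \<in> maxs (skel G). leaf G m = leaf F m)"

definition cut :: "('a, 'b) ftree \<Rightarrow> ('a, 'b) ftree \<Rightarrow> 'b set" where
  "cut F G = leaf F (zero (skel G)) - leaf G (zero (skel G))"

definition consistent_fgrafts :: "('a, 'b) ftree \<Rightarrow> ('a, 'b) ftree set \<Rightarrow> bool" where
  "consistent_fgrafts F \<phi> \<longleftrightarrow> (\<forall>G \<in> \<phi>. is_fgraft F G) \<and> inj_on skel \<phi> \<and>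
     consistent_grafts (skel F) (skel ` \<phi>)"

definition loss :: "('a, 'b) ftree \<Rightarrow> ('a, 'b) ftree set \<Rightarrow> 'b set" where
  "loss F \<phi> = (\<Union>G \<in> \<phi>. cut F G)"

definition fsupp :: "('a, 'b) ftree \<Rightarrow> ('a, 'b) ftree set \<Rightarrow> 'a set" where
  "fsupp F \<phi> = supp (skel F) (skel ` \<phi>)"

definition fhybr :: "('a, 'b) ftree \<Rightarrow> ('a, 'b) ftree set \<Rightarrow> ('a, 'b) ftree" where
  "fhybr F \<phi> = (hybr (skel F) (skel ` \<phi>),
     (\<lambda>x. if x \<in> fsupp F \<phi> then leaf F x - loss F \<phi>
          else if (\<exists>G \<in> \<phi>. x \<in> impl (skel G))
            then leaf (SOME G. G \<in> \<phi> \<and> x \<in> impl (skel G)) x - loss F \<phi>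
          else {}))"

definition preserves_shoots :: "('a, 'b) ftree \<Rightarrow> ('a, 'b) ftree \<Rightarrow> bool" where
  "preserves_shoots F G \<longleftrightarrow>
     (\<forall>p \<in> flesh G. \<forall>y \<in> scope F p \<inter> ({zero (skel G)} \<union> expl (skel F) (skel G)).
        \<exists>x \<in> scope G p \<inter> ({zero (skel G)} \<union> impl (skel G)). shoot G x \<ggreater> shoot F y)"

definition shoots_into :: "('a, 'b) ftree \<Rightarrow> ('a, 'b) ftree \<Rightarrow> bool" where
  "shoots_into H F \<longleftrightarrow>
     (\<forall>p \<in> flesh H. \<forall>y \<in> scope F p. \<exists>x \<in> scope H p. shoot H x \<ggreater> shoot F y)"

end

theory Submission
  imports Defs
begin

text \<open>Let \<open>p\<close> lie on a leaf of the hybrid, so \<open>p\<close> is not lost, and let \<open>y\<close> be a node of \<open>F\<close>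
whose leaf contains \<open>p\<close>. If \<open>y\<close> is the root of a graft \<open>G\<close> or was explanted by it, then \<open>p\<close>
lies on the root leaf of \<open>G\<close>, and shoot preservation yields a node \<open>x\<close> of \<open>G\<close> (its root or an
implanted node) carrying \<open>p\<close> whose shoot refines that of \<open>y\<close>. Otherwise \<open>y\<close> survives in the
hybrid; take \<open>x = y\<close>. In both cases the sons of \<open>x\<close> in the hybrid are exactly its sons in \<open>G\<close>,
resp. in \<open>F\<close>, and their hybrid leaves are the old leaves minus the loss. As these leaves are
nonempty, every nonempty shoot of \<open>x\<close> in the old tree contains a nonempty shoot in the hybrid.\<close>

lemma tree_lt_nodes: "is_tree T \<Longrightarrow> tlt T x y \<Longrightarrow> x \<in> nodes T \<and> y \<in> nodes T"
  unfolding is_tree_def by blast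

lemma tree_lt_irrefl: "is_tree T \<Longrightarrow> \<not> tlt T x x"
  unfolding is_tree_def by blast

lemma tree_lt_trans: "is_tree T \<Longrightarrow> tlt T x y \<Longrightarrow> tlt T y z \<Longrightarrow> tlt T x z"
  unfolding is_tree_def by blast

lemma tree_le_lt_trans: "is_tree T \<Longrightarrow> tle T x y \<Longrightarrow> tlt T y z \<Longrightarrow> tlt T x z"
  unfolding tle_def by (metis tree_lt_trans)

lemma tree_lt_le_trans: "is_tree T \<Longrightarrow> tlt T x y \<Longrightarrow> tle T y z \<Longrightarrow> tlt T x z"
  unfolding tle_def by (metis tree_lt_trans)

lemma tree_lt_linear_below:
  "is_tree T \<Longrightarrow> tlt T a w \<Longrightarrow> tlt T b w \<Longrightarrow> tlt T a b \<or> a = b \<or> tlt T b a"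
  unfolding is_tree_def by blast

lemma tree_le_linear_below: "is_tree T \<Longrightarrow> tle T a w \<Longrightarrow> tle T b w \<Longrightarrow> tle T a b \<or> tle T b a"
  unfolding tle_def by (metis tree_lt_linear_below)

lemma zero_least:
  assumes T: "is_tree T" and "has_least T"
  shows "zero T \<in> nodes T" and "x \<in> nodes T \<Longrightarrow> tle T (zero T) x"
proof -
  obtain r where r: "r \<in> nodes T" "\<forall>x \<in> nodes T. tle T r x"
    using \<open>has_least T\<close> unfolding has_least_def by blast
  have "zero T = r" unfolding zero_def
  proof (rule the_equality)
    fix r' assume "r' \<in> nodes T \<and> (\<forall>x \<in> nodes T. tle T r' x)"
    then have "tle T r' r" "tle T r r'" using r by auto
    then show "r' = r" using tree_lt_trans[OF T] tree_lt_irrefl[OF T] unfolding tle_def by blast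
  qed (use r in blast)
  with r show "zero T \<in> nodes T" and "x \<in> nodes T \<Longrightarrow> tle T (zero T) x" by auto
qed

lemma antichain_not_lt: "is_tree T \<Longrightarrow> antichain T A \<Longrightarrow> a \<in> A \<Longrightarrow> b \<in> A \<Longrightarrow> \<not> tlt T a b"
  unfolding antichain_def tpar_def tle_def by (metis tree_lt_irrefl)

lemma root_in_antichain:
  assumes T: "is_tree T" and A: "antichain T A" and y: "y \<in> down T A"
  shows "root T y A \<in> A" and "tle T (root T y A) y"
proof -
  obtain a where a: "a \<in> A" "tle T a y" using y unfolding down_def by blast
  have "root T y A = a" unfolding root_def
  proof (rule the_equality)
    fix r assume r: "r \<in> A \<and> tle T r y"
    then have "tle T r a \<or> tle T a r" using a tree_le_linear_below[OF T] by blast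
    then show "r = a" using a r A unfolding antichain_def tpar_def by blast
  qed (use a in blast)
  with a show "root T y A \<in> A" and "tle T (root T y A) y" by auto
qed

lemma root_antichain_self:
  assumes T: "is_tree T" and A: "antichain T A" and a: "a \<in> A"
  shows "root T a A = a"
proof -
  have "a \<in> down T A" using A a unfolding antichain_def down_def tle_def by blast
  then have "root T a A \<in> A" "tle T (root T a A) a" using root_in_antichain[OF T A] by auto
  then show ?thesis using A a unfolding antichain_def tpar_def by blast
qed

lemma gg_trans: "\<alpha> \<ggreater> \<beta> \<Longrightarrow> \<beta> \<ggreater> \<gamma> \<Longrightarrow> \<alpha> \<ggreater> \<gamma>"
  unfolding gg_def by (metis subset_trans)

lemma shoot_gg_if_sons_eq:
  assumes sons_eq: "sons (skel H) x = sons (skel K) x"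
    and leaf_eq: "\<And>s. s \<in> sons (skel K) x \<Longrightarrow> leaf H s = leaf K s - L"
    and nonempty: "\<And>s. s \<in> sons (skel H) x \<Longrightarrow> leaf H s \<noteq> {}"
  shows "shoot H x \<ggreater> shoot K x"
  unfolding gg_def
proof (intro ballI impI)
  fix D assume "D \<in> shoot K x" "D \<noteq> {}"
  then obtain C where C: "D = (\<Union>s \<in> C. leaf K s)" "C \<subseteq> sons (skel H) x"
      "finite (sons (skel H) x - C)"
    unfolding shoot_def sons_eq by blast
  then obtain c where "c \<in> C" using \<open>D \<noteq> {}\<close> by blast
  let ?G = "\<Union>s \<in> C. leaf H s"
  have "?G \<in> shoot H x" unfolding shoot_def using C(2,3) by blast
  moreover have "?G \<noteq> {}" using \<open>c \<in> C\<close> C(2) nonempty by blast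
  moreover have "?G \<subseteq> D" using C(1,2) leaf_eq unfolding sons_eq by blast
  ultimately show "\<exists>G \<in> shoot H x. G \<noteq> {} \<and> G \<subseteq> D" by (intro bexI[where x = ?G] conjI)
qed

lemma sons_subset_sons:
  assumes embed: "\<And>a b. a \<in> N \<Longrightarrow> b \<in> N \<Longrightarrow> tlt A a b \<longleftrightarrow> tlt B a b"
    and "x \<in> N" "N \<subseteq> nodes B" "sons A x \<subseteq> N"
    and interpolate:
      "\<And>s w. s \<in> sons A x \<Longrightarrow> tlt B x w \<Longrightarrow> tlt B w s \<Longrightarrow> \<exists>m \<in> N. tlt B x m \<and> tlt B m s"
  shows "sons A x \<subseteq> sons B x"
proof
  fix s assume s: "s \<in> sons A x"
  with assms(2,4) embed have "tlt B x s" and "s \<in> N" unfolding sons_def by auto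
  moreover have "\<not> (\<exists>w. tlt B x w \<and> tlt B w s)"
  proof
    assume "\<exists>w. tlt B x w \<and> tlt B w s"
    then obtain m where "m \<in> N" "tlt B x m" "tlt B m s" using interpolate s by blast
    then show False using s embed assms(2) \<open>s \<in> N\<close> unfolding sons_def by blast
  qed
  ultimately show "s \<in> sons B x" using assms(3) unfolding sons_def by blast
qed

lemma zero_not_impl: "zero S \<notin> impl S"
  unfolding impl_def by blast

lemma graft_nodes_cases:
  assumes "x \<in> nodes S"
  obtains "x = zero S" | "x \<in> impl S" | "x \<in> maxs S"
  using assms unfolding impl_def by blast

section \<open>Hybrids of trees\<close>

locale graft_family =
  fixes T :: "'a tree" and \<gamma> :: "'a tree set"
  assumes tree: "is_tree T" and consistent: "consistent_grafts T \<gamma>"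
begin

abbreviation "sp \<equiv> supp T \<gamma>"
abbreviation "hlt \<equiv> hybr_lt T \<gamma>"
abbreviation "H \<equiv> hybr T \<gamma>"

lemma graft: "S \<in> \<gamma> \<Longrightarrow> is_graft T S"
  using consistent unfolding consistent_grafts_def by blast

lemma graft_tree: "S \<in> \<gamma> \<Longrightarrow> is_tree S"
  using graft unfolding is_graft_def by blast

lemma graft_zero_least:
  assumes "S \<in> \<gamma>"
  shows "zero S \<in> nodes S" and "x \<in> nodes S \<Longrightarrow> tle S (zero S) x"
proof -
  have "has_least S" using graft[OF assms] unfolding is_graft_def by blast
  then show "zero S \<in> nodes S" and "x \<in> nodes S \<Longrightarrow> tle S (zero S) x"
    using zero_least[OF graft_tree[OF assms]] by blast+
qed

lemma graft_zero_node: "S \<in> \<gamma> \<Longrightarrow> zero S \<in> nodes T"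
  using graft unfolding is_graft_def by blast

lemma graft_maxs: "S \<in> \<gamma> \<Longrightarrow> m \<in> maxs S \<Longrightarrow> m \<in> nodes T \<and> tlt T (zero S) m"
  using graft unfolding is_graft_def by blast

lemma graft_maxs_antichain: "S \<in> \<gamma> \<Longrightarrow> antichain T (maxs S)"
  using graft unfolding is_graft_def by blast

lemma impl_not_node: "S \<in> \<gamma> \<Longrightarrow> x \<in> impl S \<Longrightarrow> x \<notin> nodes T"
  using graft unfolding is_graft_def by blast

lemma graft_zero_lt_maxs: "S \<in> \<gamma> \<Longrightarrow> m \<in> maxs S \<Longrightarrow> tlt S (zero S) m"
  using graft_zero_least graft_maxs tree_lt_irrefl[OF tree] unfolding maxs_def tle_def by blast

lemma graft_zero_lt_impl: "S \<in> \<gamma> \<Longrightarrow> x \<in> impl S \<Longrightarrow> tlt S (zero S) x"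
  using graft_zero_least unfolding impl_def tle_def by blast

lemma grafts_consistent:
  "D \<in> \<gamma> \<Longrightarrow> E \<in> \<gamma> \<Longrightarrow> D \<noteq> E \<Longrightarrow> impl D \<inter> impl E = {} \<and>
     (tpar T (zero D) (zero E) \<or> zero D \<in> down T (maxs E) \<or> zero E \<in> down T (maxs D))"
  using consistent unfolding consistent_grafts_def by blast

lemma impl_unique: "D \<in> \<gamma> \<Longrightarrow> E \<in> \<gamma> \<Longrightarrow> x \<in> impl D \<Longrightarrow> x \<in> impl E \<Longrightarrow> D = E"
  using grafts_consistent by blast

lemma root_maxs:
  "S \<in> \<gamma> \<Longrightarrow> v \<in> down T (maxs S) \<Longrightarrow> root T v (maxs S) \<in> maxs S \<and> tle T (root T v (maxs S)) v"
  using root_in_antichain[OF tree graft_maxs_antichain] by blast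

lemma root_maxs_self: "S \<in> \<gamma> \<Longrightarrow> m \<in> maxs S \<Longrightarrow> root T m (maxs S) = m"
  using root_antichain_self[OF tree graft_maxs_antichain] by blast

lemma maxs_in_down: "S \<in> \<gamma> \<Longrightarrow> m \<in> maxs S \<Longrightarrow> m \<in> down T (maxs S)"
  using graft_maxs unfolding down_def tle_def by blast

lemma zero_lt_down_maxs: "S \<in> \<gamma> \<Longrightarrow> v \<in> down T (maxs S) \<Longrightarrow> tlt T (zero S) v"
  unfolding down_def using graft_maxs tree_lt_le_trans[OF tree] by blast

lemma maxs_not_lt_graft_node:
  assumes S: "S \<in> \<gamma>" and m: "m \<in> maxs S" and s: "s \<in> nodes S"
  shows "\<not> tlt T m s"
proof
  assume ms: "tlt T m s"
  then have "s \<notin> impl S" using impl_not_node[OF S] tree_lt_nodes[OF tree] by blast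
  moreover have "s \<noteq> zero S"
    using ms graft_maxs[OF S m] tree_lt_trans[OF tree] tree_lt_irrefl[OF tree] by blast
  ultimately have "s \<in> maxs S" using s unfolding impl_def by blast
  then show False using antichain_not_lt[OF tree graft_maxs_antichain[OF S] m] ms by blast
qed

lemma supp_node: "v \<in> sp \<Longrightarrow> v \<in> nodes T"
  unfolding supp_def by blast

lemma impl_not_supp: "S \<in> \<gamma> \<Longrightarrow> x \<in> impl S \<Longrightarrow> x \<notin> sp"
  using impl_not_node supp_node by blast

lemma supp_above_zero: "v \<in> sp \<Longrightarrow> S \<in> \<gamma> \<Longrightarrow> tlt T (zero S) v \<Longrightarrow> v \<in> down T (maxs S)"
  unfolding supp_def expl_def by blast

lemma zero_in_supp:
  assumes S: "S \<in> \<gamma>"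
  shows "zero S \<in> sp"
proof -
  have "zero S \<notin> expl T E" if E: "E \<in> \<gamma>" for E
  proof
    assume "zero S \<in> expl T E"
    then have ES: "tlt T (zero E) (zero S)" and "zero S \<notin> down T (maxs E)" unfolding expl_def by auto
    moreover have "E \<noteq> S" using ES tree_lt_irrefl[OF tree] by blast
    moreover have "zero E \<notin> down T (maxs S)"
      using zero_lt_down_maxs[OF S] ES tree_lt_trans[OF tree] tree_lt_irrefl[OF tree] by blast
    ultimately show False using grafts_consistent[OF E S] unfolding tpar_def tle_def by blast
  qed
  then show ?thesis using graft_zero_node[OF S] unfolding supp_def by blast
qed

lemma graft_zero_inj: "D \<in> \<gamma> \<Longrightarrow> E \<in> \<gamma> \<Longrightarrow> zero D = zero E \<Longrightarrow> D = E"
  using grafts_consistent zero_lt_down_maxs tree_lt_irrefl[OF tree] unfolding tpar_def tle_def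
  by metis

lemma maxs_in_supp:
  assumes S: "S \<in> \<gamma>" and m: "m \<in> maxs S"
  shows "m \<in> sp"
proof -
  have mT: "m \<in> nodes T" and zm: "tlt T (zero S) m" using graft_maxs[OF S m] by auto
  have "m \<notin> expl T E" if E: "E \<in> \<gamma>" for E
  proof
    assume "m \<in> expl T E"
    then have Em: "tlt T (zero E) m" and m_out: "m \<notin> down T (maxs E)" unfolding expl_def by auto
    have "E \<noteq> S" using m_out maxs_in_down[OF S m] by blast
    moreover have "\<not> tpar T (zero S) (zero E)"
      using tree_lt_linear_below[OF tree zm Em] unfolding tpar_def tle_def by blast
    moreover have "zero S \<notin> down T (maxs E)"
      using m_out zm mT tree_le_lt_trans[OF tree] unfolding down_def tle_def by blast
    moreover have "zero E \<notin> down T (maxs S)"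
      using Em m antichain_not_lt[OF tree graft_maxs_antichain[OF S]] tree_le_lt_trans[OF tree]
      unfolding down_def by blast
    ultimately show False using grafts_consistent[OF S E] by blast
  qed
  then show ?thesis using mT unfolding supp_def by blast
qed

lemma nodes_hybr: "nodes H = sp \<union> (\<Union>S \<in> \<gamma>. impl S)"
  unfolding hybr_def nodes_def by simp

lemma tlt_hybr: "tlt H = hlt"
  unfolding hybr_def tlt_def by simp

lemma hybr_lt_nodes:
  "hlt x y \<Longrightarrow> (x \<in> sp \<or> (\<exists>S \<in> \<gamma>. x \<in> impl S)) \<and> (y \<in> sp \<or> (\<exists>S \<in> \<gamma>. y \<in> impl S))"
  unfolding hybr_lt_def by blast

lemma hybr_lt_supp_supp: "x \<in> sp \<Longrightarrow> y \<in> sp \<Longrightarrow> hlt x y \<longleftrightarrow> tlt T x y"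
  unfolding hybr_lt_def using impl_not_supp by blast

lemma hybr_lt_supp_impl:
  assumes S: "S \<in> \<gamma>" and x: "x \<in> sp" and y: "y \<in> impl S"
  shows "hlt x y \<longleftrightarrow> tle T x (zero S)"
proof
  assume "hlt x y"
  moreover have "\<forall>G \<in> \<gamma>. x \<notin> impl G" "y \<notin> sp" using impl_not_supp x S y by blast+
  ultimately obtain G where "G \<in> \<gamma>" "y \<in> impl G" "tle T x (zero G)"
    unfolding hybr_lt_def by blast
  then show "tle T x (zero S)" using impl_unique[OF S _ y] by metis
qed (use S x y in \<open>unfold hybr_lt_def, blast\<close>)

lemma hybr_lt_impl_supp:
  assumes S: "S \<in> \<gamma>" and x: "x \<in> impl S" and y: "y \<in> sp"
  shows "hlt x y \<longleftrightarrow> y \<in> down T (maxs S) \<and> tlt S x (root T y (maxs S))"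
proof
  assume "hlt x y"
  moreover have "\<forall>G \<in> \<gamma>. y \<notin> impl G" "x \<notin> sp" using impl_not_supp x S y by blast+
  ultimately obtain G where "G \<in> \<gamma>" "x \<in> impl G" "y \<in> down T (maxs G)"
      "tlt G x (root T y (maxs G))"
    unfolding hybr_lt_def by blast
  then show "y \<in> down T (maxs S) \<and> tlt S x (root T y (maxs S))" using impl_unique[OF S _ x] by metis
qed (use S x y in \<open>unfold hybr_lt_def, blast\<close>)

lemma hybr_lt_impl_impl:
  assumes S: "S \<in> \<gamma>" and x: "x \<in> impl S" and y: "y \<in> impl S"
  shows "hlt x y \<longleftrightarrow> tlt S x y"
proof
  assume "hlt x y"
  moreover have "x \<notin> sp" "y \<notin> sp" using impl_not_supp x y S by blast+
  moreover have "\<not> (\<exists>D \<in> \<gamma>. \<exists>E \<in> \<gamma>. D \<noteq> E \<and> x \<in> impl D \<and> y \<in> impl E)"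
    using impl_unique[OF S _ x] impl_unique[OF S _ y] by metis
  ultimately obtain G where "G \<in> \<gamma>" "x \<in> impl G" "tlt G x y"
    unfolding hybr_lt_def by blast
  then show "tlt S x y" using impl_unique[OF S _ x] by metis
qed (use S x y in \<open>unfold hybr_lt_def, blast\<close>)

lemma hybr_lt_impl_impl_distinct:
  assumes D: "D \<in> \<gamma>" and E: "E \<in> \<gamma>" and "D \<noteq> E" and x: "x \<in> impl D" and y: "y \<in> impl E"
  shows "hlt x y \<longleftrightarrow> zero E \<in> down T (maxs D) \<and> tlt D x (root T (zero E) (maxs D))"
proof
  assume "hlt x y"
  moreover have "x \<notin> sp" "y \<notin> sp" using impl_not_supp x y D E by blast+
  moreover have "\<not> (\<exists>G \<in> \<gamma>. x \<in> impl G \<and> y \<in> impl G)"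
    using impl_unique[OF D _ x] impl_unique[OF E _ y] \<open>D \<noteq> E\<close> by metis
  ultimately obtain D' E' where "D' \<in> \<gamma>" "E' \<in> \<gamma>" "x \<in> impl D'" "y \<in> impl E'"
      "zero E' \<in> down T (maxs D')" "tlt D' x (root T (zero E') (maxs D'))"
    unfolding hybr_lt_def by blast
  then show "zero E \<in> down T (maxs D) \<and> tlt D x (root T (zero E) (maxs D))"
    using impl_unique[OF D _ x] impl_unique[OF E _ y] by metis
qed (use assms in \<open>unfold hybr_lt_def, blast\<close>)

lemma graft_nodes_subset_hybr: "S \<in> \<gamma> \<Longrightarrow> nodes S \<subseteq> nodes H"
  unfolding nodes_hybr using zero_in_supp maxs_in_supp by (blast elim: graft_nodes_cases)

lemma hybr_lt_from_graft_zero: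
  assumes S: "S \<in> \<gamma>" and b: "b \<in> nodes S"
  shows "hlt (zero S) b \<longleftrightarrow> b \<noteq> zero S"
  using b
proof (cases rule: graft_nodes_cases)
  case 1
  then show ?thesis
    using hybr_lt_supp_supp[OF zero_in_supp[OF S] zero_in_supp[OF S]] tree_lt_irrefl[OF tree] by simp
next
  case 2
  then have "b \<noteq> zero S" unfolding impl_def by blast
  with 2 show ?thesis using hybr_lt_supp_impl[OF S zero_in_supp[OF S]] by (simp add: tle_def)
next
  case 3
  then show ?thesis
    using hybr_lt_supp_supp zero_in_supp[OF S] maxs_in_supp[OF S] graft_maxs[OF S]
      tree_lt_irrefl[OF tree] by metis
qed

lemma hybr_not_lt_from_maxs:
  assumes S: "S \<in> \<gamma>" and m: "m \<in> maxs S" and b: "b \<in> nodes S"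
  shows "\<not> hlt m b"
  using b
proof (cases rule: graft_nodes_cases)
  case 2
  have "m \<noteq> zero S" using graft_maxs[OF S m] tree_lt_irrefl[OF tree] by blast
  then show ?thesis using 2 hybr_lt_supp_impl[OF S maxs_in_supp[OF S m]]
      maxs_not_lt_graft_node[OF S m graft_zero_least(1)[OF S]] unfolding tle_def by blast
next
  case 1
  then have "b \<in> sp" using zero_in_supp[OF S] by simp
  then show ?thesis
    using hybr_lt_supp_supp[OF maxs_in_supp[OF S m]] maxs_not_lt_graft_node[OF S m b] by blast
next
  case 3
  then have "b \<in> sp" using maxs_in_supp[OF S] by simp
  then show ?thesis
    using hybr_lt_supp_supp[OF maxs_in_supp[OF S m]] maxs_not_lt_graft_node[OF S m b] by blast
qed

lemma hybr_lt_graft_iff: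
  assumes S: "S \<in> \<gamma>" and a: "a \<in> nodes S" and b: "b \<in> nodes S"
  shows "hlt a b \<longleftrightarrow> tlt S a b"
  using a
proof (cases rule: graft_nodes_cases)
  case 1
  moreover have "tlt S (zero S) b \<longleftrightarrow> b \<noteq> zero S"
    using graft_zero_least(2)[OF S b] tree_lt_irrefl[OF graft_tree[OF S]] unfolding tle_def by blast
  ultimately show ?thesis using hybr_lt_from_graft_zero[OF S b] by simp
next
  case a_impl: 2
  show ?thesis
    using b
  proof (cases rule: graft_nodes_cases)
    case 1
    have "\<not> tlt S a (zero S)"
      using graft_zero_lt_impl[OF S a_impl] tree_lt_trans tree_lt_irrefl graft_tree[OF S] by metis
    moreover have "\<not> hlt a (zero S)" using hybr_lt_impl_supp[OF S a_impl zero_in_supp[OF S]]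
        zero_lt_down_maxs[OF S] tree_lt_irrefl[OF tree] by blast
    ultimately show ?thesis using 1 by simp
  next
    case 2
    then show ?thesis using hybr_lt_impl_impl[OF S a_impl] by blast
  next
    case 3
    then show ?thesis using hybr_lt_impl_supp[OF S a_impl maxs_in_supp[OF S]]
        maxs_in_down[OF S] root_maxs_self[OF S] by simp
  qed
next
  case 3
  then show ?thesis using hybr_not_lt_from_maxs[OF S _ b] unfolding maxs_def by blast
qed

lemma hybr_lt_leaving_graft:
  assumes S: "S \<in> \<gamma>" and x: "x \<in> insert (zero S) (impl S)" and xw: "hlt x w" and w: "w \<notin> impl S"
  shows "\<exists>m \<in> maxs S. hlt x m \<and> (m = w \<or> hlt m w)"
proof -
  have x_node: "x \<in> nodes S" using x graft_zero_least(1)[OF S] unfolding impl_def by blast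
  have to_root: "hlt x (root T v (maxs S))"
    if v: "v \<in> down T (maxs S)" "x \<in> impl S \<longrightarrow> tlt S x (root T v (maxs S))" for v
  proof -
    have m: "root T v (maxs S) \<in> maxs S" using root_maxs[OF S v(1)] by blast
    then have "tlt S x (root T v (maxs S))" using v(2) x graft_zero_lt_maxs[OF S] by blast
    then show ?thesis using hybr_lt_graft_iff[OF S x_node] m unfolding maxs_def by blast
  qed
  consider "w \<in> sp" | E where "E \<in> \<gamma>" "w \<in> impl E" "S \<noteq> E" using hybr_lt_nodes[OF xw] w by blast
  then show ?thesis
  proof cases
    case 1
    have "w \<in> down T (maxs S) \<and> (x \<in> impl S \<longrightarrow> tlt S x (root T w (maxs S)))"
    proof (cases "x = zero S")
      case True
      then show ?thesis using supp_above_zero[OF 1 S] hybr_lt_supp_supp[OF zero_in_supp[OF S] 1]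
          xw zero_not_impl by blast
    next
      case False
      then show ?thesis using hybr_lt_impl_supp[OF S _ 1] x xw by blast
    qed
    moreover have "m = w \<or> hlt m w" if "tle T m w" "m \<in> maxs S" for m
      using that hybr_lt_supp_supp[OF maxs_in_supp[OF S] 1] unfolding tle_def by blast
    ultimately show ?thesis using to_root root_maxs[OF S] by blast
  next
    case 2
    have "zero E \<in> down T (maxs S) \<and> (x \<in> impl S \<longrightarrow> tlt S x (root T (zero E) (maxs S)))"
    proof (cases "x = zero S")
      case True
      then have "tle T (zero S) (zero E)" using hybr_lt_supp_impl[OF 2(1) zero_in_supp[OF S] 2(2)] xw by simp
      moreover have "zero S \<noteq> zero E" using graft_zero_inj[OF S 2(1)] 2(3) by blast
      ultimately show ?thesis
        using supp_above_zero[OF zero_in_supp[OF 2(1)] S] True zero_not_impl unfolding tle_def by blast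
    next
      case False
      then show ?thesis using hybr_lt_impl_impl_distinct[OF S 2(1) 2(3) _ 2(2)] x xw by blast
    qed
    moreover have "hlt m w" if "tle T m (zero E)" "m \<in> maxs S" for m
      using that hybr_lt_supp_impl[OF 2(1) maxs_in_supp[OF S] 2(2)] by blast
    ultimately show ?thesis using to_root root_maxs[OF S] by blast
  qed
qed

lemma hybr_lt_no_return_from_maxs:
  assumes S: "S \<in> \<gamma>" and m: "m \<in> maxs S" and s: "s \<in> nodes S" and mw: "hlt m w" and ws: "hlt w s"
  shows False
proof -
  have m_sp: "m \<in> sp" using maxs_in_supp[OF S m] .
  \<comment> \<open>the path \<open>m < w < s\<close> forces \<open>m\<close> strictly below \<open>t\<close> in \<open>T\<close>, impossible for a node \<open>t\<close> of \<open>S\<close>\<close>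
  define t where "t = (if s \<in> impl S then zero S else s)"
  have t_node: "t \<in> nodes S" using s graft_zero_least(1)[OF S] unfolding t_def by simp
  have t_sp: "t \<in> sp"
    using t_node zero_in_supp[OF S] maxs_in_supp[OF S] unfolding t_def by (auto elim: graft_nodes_cases)
  consider "w \<in> sp" | E where "E \<in> \<gamma>" "w \<in> impl E" using hybr_lt_nodes[OF mw] by blast
  then have "tlt T m t"
  proof cases
    case 1
    then have "tlt T m w" using hybr_lt_supp_supp[OF m_sp] mw by blast
    moreover have "tle T w t" using hybr_lt_supp_impl[OF S 1] hybr_lt_supp_supp[OF 1 t_sp] ws
      unfolding t_def tle_def by (auto split: if_splits)
    ultimately show ?thesis using tree_lt_le_trans[OF tree] by blast
  next
    case 2
    have m_E: "tle T m (zero E)" using hybr_lt_supp_impl[OF 2(1) m_sp 2(2)] mw by blast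
    have "E \<noteq> S" using m_E graft_maxs[OF S m] tree_lt_le_trans[OF tree] tree_lt_irrefl[OF tree] by blast
    then have "tlt T (zero E) t"
      using hybr_lt_impl_impl_distinct[OF 2(1) S _ 2(2)] hybr_lt_impl_supp[OF 2(1) 2(2) t_sp] ws
        zero_lt_down_maxs[OF 2(1)] unfolding t_def by (auto split: if_splits)
    then show ?thesis using m_E tree_le_lt_trans[OF tree] by blast
  qed
  then show False using maxs_not_lt_graft_node[OF S m t_node] by blast
qed

lemma hybr_between_graft_nodes:
  assumes S: "S \<in> \<gamma>" and x: "x \<in> insert (zero S) (impl S)" and s: "s \<in> nodes S"
    and xw: "hlt x w" and ws: "hlt w s"
  shows "w \<in> impl S"
proof (rule ccontr)
  assume "w \<notin> impl S"
  then obtain m where m: "m \<in> maxs S" "hlt x m" and mw: "m = w \<or> hlt m w"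
    using hybr_lt_leaving_graft[OF S x xw] by blast
  from mw show False
  proof
    assume "m = w"
    then have "tlt S m s" using ws hybr_lt_graft_iff[OF S _ s] m(1) unfolding maxs_def by blast
    then show False using m(1) unfolding maxs_def by blast
  qed (use hybr_lt_no_return_from_maxs[OF S m(1) s _ ws] in blast)
qed

lemma sons_hybr_graft_subset:
  assumes S: "S \<in> \<gamma>" and x: "x \<in> insert (zero S) (impl S)"
  shows "sons H x \<subseteq> nodes S"
proof
  fix s assume s: "s \<in> sons H x"
  show "s \<in> nodes S"
  proof (rule ccontr)
    assume "s \<notin> nodes S"
    moreover have "hlt x s" using s unfolding sons_def tlt_hybr by blast
    ultimately obtain m where "m \<in> maxs S" "hlt x m" "hlt m s"
      using hybr_lt_leaving_graft[OF S x] unfolding impl_def maxs_def by blast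
    then show False using s unfolding sons_def tlt_hybr by blast
  qed
qed

lemma sons_hybr_graft:
  assumes S: "S \<in> \<gamma>" and x: "x \<in> insert (zero S) (impl S)"
  shows "sons H x = sons S x"
proof
  have x_node: "x \<in> nodes S" using x graft_zero_least(1)[OF S] unfolding impl_def by blast
  have embed: "tlt H a b \<longleftrightarrow> tlt S a b" if "a \<in> nodes S" "b \<in> nodes S" for a b
    using hybr_lt_graft_iff[OF S that] unfolding tlt_hybr .
  show "sons H x \<subseteq> sons S x"
    using sons_subset_sons[OF embed x_node subset_refl sons_hybr_graft_subset[OF S x]]
      tree_lt_nodes[OF graft_tree[OF S]] by blast
  show "sons S x \<subseteq> sons H x"
  proof (rule sons_subset_sons[OF embed[symmetric] x_node graft_nodes_subset_hybr[OF S]])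
    show "sons S x \<subseteq> nodes S" unfolding sons_def by blast
    fix s w assume "s \<in> sons S x" "tlt H x w" "tlt H w s"
    then have "w \<in> impl S"
      using hybr_between_graft_nodes[OF S x] unfolding sons_def tlt_hybr by blast
    then show "\<exists>m \<in> nodes S. tlt H x m \<and> tlt H m s"
      using \<open>tlt H x w\<close> \<open>tlt H w s\<close> unfolding impl_def by blast
  qed
qed

lemma supp_exit_passes_zero:
  assumes y: "y \<in> sp" and y_nz: "\<forall>S \<in> \<gamma>. y \<noteq> zero S" and yw: "tlt T y w" and w: "w \<notin> sp"
  shows "\<exists>S \<in> \<gamma>. tlt T y (zero S) \<and> tlt T (zero S) w"
proof -
  have "w \<in> nodes T" using tree_lt_nodes[OF tree yw] by blast
  then obtain S where S: "S \<in> \<gamma>" "w \<in> expl T S" using w unfolding supp_def by blast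
  then have Sw: "tlt T (zero S) w" and w_out: "w \<notin> down T (maxs S)" unfolding expl_def by auto
  have "\<not> tlt T (zero S) y"
  proof
    assume "tlt T (zero S) y"
    then obtain m where "m \<in> maxs S" "tle T m y"
      using supp_above_zero[OF y S(1)] unfolding down_def by blast
    then have "w \<in> down T (maxs S)"
      using yw \<open>w \<in> nodes T\<close> tree_le_lt_trans[OF tree] unfolding down_def tle_def by blast
    then show False using w_out by blast
  qed
  then have "tlt T y (zero S)" using tree_lt_linear_below[OF tree yw Sw] y_nz S(1) by blast
  then show ?thesis using S(1) Sw by blast
qed

lemma sons_supp_subset_supp:
  assumes y: "y \<in> sp" and y_nz: "\<forall>S \<in> \<gamma>. y \<noteq> zero S"
  shows "sons T y \<subseteq> sp"
  using supp_exit_passes_zero[OF y y_nz] unfolding sons_def by blast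

lemma hybr_lt_supp_impl_below_zero:
  assumes y: "y \<in> sp" and y_nz: "\<forall>S \<in> \<gamma>. y \<noteq> zero S"
    and E: "E \<in> \<gamma>" "w \<in> impl E" and yw: "hlt y w"
  shows "hlt y (zero E)"
proof -
  have "tle T y (zero E)" using hybr_lt_supp_impl[OF E(1) y E(2)] yw by blast
  then have "tlt T y (zero E)" using y_nz E(1) unfolding tle_def by blast
  then show ?thesis using hybr_lt_supp_supp[OF y zero_in_supp[OF E(1)]] by blast
qed

lemma sons_hybr_supp_subset:
  assumes y: "y \<in> sp" and y_nz: "\<forall>S \<in> \<gamma>. y \<noteq> zero S"
  shows "sons H y \<subseteq> sp"
proof
  fix s assume s: "s \<in> sons H y"
  then have ys: "hlt y s" unfolding sons_def tlt_hybr by blast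
  show "s \<in> sp"
  proof (rule ccontr)
    assume "s \<notin> sp"
    then obtain E where E: "E \<in> \<gamma>" "s \<in> impl E" using hybr_lt_nodes[OF ys] by blast
    then have "hlt (zero E) s" using hybr_lt_supp_impl[OF E(1) zero_in_supp[OF E(1)] E(2)]
      by (simp add: tle_def)
    then show False
      using s hybr_lt_supp_impl_below_zero[OF y y_nz E ys] unfolding sons_def tlt_hybr by blast
  qed
qed

lemma sons_hybr_supp:
  assumes y: "y \<in> sp" and y_nz: "\<forall>S \<in> \<gamma>. y \<noteq> zero S"
  shows "sons H y = sons T y"
proof
  have embed: "tlt H a b \<longleftrightarrow> tlt T a b" if "a \<in> sp" "b \<in> sp" for a b
    using hybr_lt_supp_supp[OF that] unfolding tlt_hybr .
  show "sons H y \<subseteq> sons T y"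
  proof (rule sons_subset_sons[OF embed y supp_node[THEN subsetI] sons_hybr_supp_subset[OF y y_nz]])
    fix s w assume "s \<in> sons H y" and yw: "tlt T y w" and ws: "tlt T w s"
    show "\<exists>m \<in> sp. tlt T y m \<and> tlt T m s"
    proof (cases "w \<in> sp")
      case False
      then obtain S where "S \<in> \<gamma>" "tlt T y (zero S)" "tlt T (zero S) w"
        using supp_exit_passes_zero[OF y y_nz yw] by blast
      then show ?thesis using zero_in_supp ws tree_lt_trans[OF tree] by blast
    next
      case True
      with yw ws show ?thesis by blast
    qed
  qed
  show "sons T y \<subseteq> sons H y"
  proof (rule sons_subset_sons[OF embed[symmetric] y _ sons_supp_subset_supp[OF y y_nz]])
    show "sp \<subseteq> nodes H" unfolding nodes_hybr by blast
    fix s w assume "s \<in> sons T y" and yw: "tlt H y w" and ws: "tlt H w s"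
    then have s: "s \<in> sp" using sons_supp_subset_supp[OF y y_nz] by blast
    show "\<exists>m \<in> sp. tlt H y m \<and> tlt H m s"
    proof (cases "w \<in> sp")
      case False
      then obtain E where E: "E \<in> \<gamma>" "w \<in> impl E"
        using hybr_lt_nodes[of y w] yw unfolding tlt_hybr by blast
      then have "s \<in> down T (maxs E)" using hybr_lt_impl_supp[OF E s] ws unfolding tlt_hybr by blast
      then have "hlt (zero E) s"
        using zero_lt_down_maxs[OF E(1)] hybr_lt_supp_supp[OF zero_in_supp[OF E(1)] s] by blast
      moreover have "hlt y (zero E)"
        using hybr_lt_supp_impl_below_zero[OF y y_nz E] yw unfolding tlt_hybr by blast
      ultimately show ?thesis using zero_in_supp[OF E(1)] unfolding tlt_hybr by blast
    next
      case True
      with yw ws show ?thesis by blast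
    qed
  qed
qed

end

section \<open>Foliage hybrids\<close>

locale foliage_graft_family =
  fixes F :: "('a, 'b) ftree" and \<phi> :: "('a, 'b) ftree set"
  assumes F_nonincreasing: "nonincreasing F" and \<phi>_consistent: "consistent_fgrafts F \<phi>"
begin

sublocale graft_family "skel F" "skel ` \<phi>"
  using F_nonincreasing \<phi>_consistent unfolding nonincreasing_def is_ftree_def consistent_fgrafts_def
  by unfold_locales blast+

abbreviation "Hf \<equiv> fhybr F \<phi>"

lemma skel_fhybr: "skel Hf = H"
  unfolding skel_def fhybr_def by simp

lemma foliage_graft: "G \<in> \<phi> \<Longrightarrow> is_fgraft F G"
  using \<phi>_consistent unfolding consistent_fgrafts_def by blast

lemma leaf_fhybr_supp: "x \<in> sp \<Longrightarrow> leaf Hf x = leaf F x - loss F \<phi>"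
  unfolding leaf_def fhybr_def fsupp_def by simp

lemma leaf_fhybr_disjoint_loss: "leaf Hf x \<inter> loss F \<phi> = {}"
  unfolding leaf_def fhybr_def by auto

lemma leaf_fhybr_impl:
  assumes G: "G \<in> \<phi>" and x: "x \<in> impl (skel G)"
  shows "leaf Hf x = leaf G x - loss F \<phi>"
proof -
  have ex: "\<exists>G' \<in> \<phi>. x \<in> impl (skel G')" using G x by blast
  define G' where "G' = (SOME G'. G' \<in> \<phi> \<and> x \<in> impl (skel G'))"
  have "G' \<in> \<phi>" "x \<in> impl (skel G')"
    using someI_ex[of "\<lambda>G'. G' \<in> \<phi> \<and> x \<in> impl (skel G')"] ex unfolding G'_def by blast+
  then have "skel G' = skel G" using impl_unique G x by blast
  then have "G' = G"
    using \<phi>_consistent \<open>G' \<in> \<phi>\<close> G unfolding consistent_fgrafts_def inj_on_def by blast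
  moreover have "x \<notin> fsupp F \<phi>" using impl_not_supp G x unfolding fsupp_def by blast
  ultimately show ?thesis using ex unfolding leaf_def fhybr_def G'_def by simp
qed

lemma leaf_fhybr_graft:
  assumes G: "G \<in> \<phi>" and s: "s \<in> impl (skel G) \<union> maxs (skel G)"
  shows "leaf Hf s = leaf G s - loss F \<phi>"
  using s
proof
  assume "s \<in> maxs (skel G)"
  moreover have "leaf G s = leaf F s" using foliage_graft[OF G] calculation unfolding is_fgraft_def by blast
  moreover have "s \<in> sp" using maxs_in_supp G calculation(1) by blast
  ultimately show ?thesis using leaf_fhybr_supp by simp
qed (rule leaf_fhybr_impl[OF G])

lemma scope_fhybr_graft:
  assumes G: "G \<in> \<phi>" and x: "x \<in> insert (zero (skel G)) (impl (skel G))"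
    and "p \<in> leaf G x" and "p \<notin> loss F \<phi>"
  shows "x \<in> scope Hf p"
proof -
  have "p \<in> leaf Hf x"
  proof (cases "x = zero (skel G)")
    case True
    moreover have "leaf G (zero (skel G)) \<subseteq> leaf F (zero (skel G))"
      using foliage_graft[OF G] unfolding is_fgraft_def by blast
    ultimately show ?thesis using assms leaf_fhybr_supp[OF zero_in_supp] by auto
  next
    case False
    then show ?thesis using assms leaf_fhybr_impl by auto
  qed
  moreover have "x \<in> nodes (skel Hf)"
    using x graft_nodes_subset_hybr G graft_zero_least(1) unfolding skel_fhybr impl_def by blast
  ultimately show ?thesis unfolding scope_def by blast
qed

lemma shoot_fhybr_graft:
  assumes nonempty: "nonempty_leaves Hf" and G: "G \<in> \<phi>"
    and x: "x \<in> insert (zero (skel G)) (impl (skel G))"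
  shows "shoot Hf x \<ggreater> shoot G x"
proof (rule shoot_gg_if_sons_eq)
  have S: "skel G \<in> skel ` \<phi>" using G by blast
  show "sons (skel Hf) x = sons (skel G) x" using sons_hybr_graft[OF S x] unfolding skel_fhybr .
  show "leaf Hf s = leaf G s - loss F \<phi>" if s: "s \<in> sons (skel G) x" for s
  proof -
    have "tlt (skel G) x s" "s \<in> nodes (skel G)" using s unfolding sons_def by blast+
    moreover have "x \<in> nodes (skel G)" using x graft_zero_least(1)[OF S] unfolding impl_def by blast
    ultimately have "tlt (skel G) (zero (skel G)) s"
      using graft_zero_least(2)[OF S] tree_le_lt_trans[OF graft_tree[OF S]] by blast
    then have "s \<noteq> zero (skel G)" using tree_lt_irrefl[OF graft_tree[OF S]] by blast
    then show ?thesis using leaf_fhybr_graft[OF G] \<open>s \<in> nodes (skel G)\<close> unfolding impl_def by blast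
  qed
  show "leaf Hf s \<noteq> {}" if "s \<in> sons (skel Hf) x" for s
    using that nonempty unfolding sons_def nonempty_leaves_def by blast
qed

lemma shoot_fhybr_supp:
  assumes nonempty: "nonempty_leaves Hf" and y: "y \<in> sp" and y_nz: "\<forall>S \<in> skel ` \<phi>. y \<noteq> zero S"
  shows "shoot Hf y \<ggreater> shoot F y"
proof (rule shoot_gg_if_sons_eq)
  show "sons (skel Hf) y = sons (skel F) y" using sons_hybr_supp[OF y y_nz] unfolding skel_fhybr .
  show "leaf Hf s = leaf F s - loss F \<phi>" if "s \<in> sons (skel F) y" for s
    using that sons_supp_subset_supp[OF y y_nz] leaf_fhybr_supp by blast
  show "leaf Hf s \<noteq> {}" if "s \<in> sons (skel Hf) y" for s
    using that nonempty unfolding sons_def nonempty_leaves_def by blast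
qed

lemma fhybr_shoots_at_graft:
  assumes nonempty: "nonempty_leaves Hf" and G: "G \<in> \<phi>" "preserves_shoots F G"
    and p: "p \<notin> loss F \<phi>" and y: "y \<in> scope F p"
    and y_G: "y \<in> insert (zero (skel G)) (expl (skel F) (skel G))"
  shows "\<exists>x \<in> scope Hf p. shoot Hf x \<ggreater> shoot F y"
proof -
  let ?S = "skel G"
  have S: "?S \<in> skel ` \<phi>" using G by blast
  have "p \<in> leaf F (zero ?S)"
  proof (cases "y = zero ?S")
    case False
    then have "tlt (skel F) (zero ?S) y" using y_G unfolding expl_def by blast
    then show ?thesis using y F_nonincreasing graft_zero_node[OF S]
      unfolding scope_def nonincreasing_def tle_def by blast
  qed (use y in \<open>simp add: scope_def\<close>)
  then have "p \<in> leaf G (zero ?S)" using p G unfolding loss_def cut_def by blast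
  then have "p \<in> flesh G" using graft_zero_least(1)[OF S] unfolding flesh_def by blast
  then obtain x where x: "x \<in> scope G p" "x \<in> insert (zero ?S) (impl ?S)" and "shoot G x \<ggreater> shoot F y"
    using G y y_G unfolding preserves_shoots_def by blast
  moreover have "x \<in> scope Hf p"
    using scope_fhybr_graft[OF G(1) x(2) _ p] x(1) unfolding scope_def by blast
  ultimately show ?thesis using shoot_fhybr_graft[OF nonempty G(1) x(2)] gg_trans by blast
qed

lemma fhybr_shoots_at_supp:
  assumes nonempty: "nonempty_leaves Hf" and y: "y \<in> sp" and y_nz: "\<forall>S \<in> skel ` \<phi>. y \<noteq> zero S"
    and p: "p \<notin> loss F \<phi>" and py: "y \<in> scope F p"
  shows "\<exists>x \<in> scope Hf p. shoot Hf x \<ggreater> shoot F y"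
proof -
  have "y \<in> scope Hf p"
    using py p leaf_fhybr_supp[OF y] y unfolding scope_def skel_fhybr nodes_hybr by blast
  then show ?thesis using shoot_fhybr_supp[OF nonempty y y_nz] by blast
qed

end

theorem mainTheorem13:
  fixes F :: "('a, 'b) ftree" and \<phi> :: "('a, 'b) ftree set"
  assumes "nonincreasing F"
    and "consistent_fgrafts F \<phi>"
    and "nonempty_leaves (fhybr F \<phi>)"
    and "\<forall>G \<in> \<phi>. preserves_shoots F G"
  shows "shoots_into (fhybr F \<phi>) F"
  unfolding shoots_into_def
proof (intro ballI)
  interpret foliage_graft_family F \<phi> using assms(1,2) by unfold_locales
  fix p y assume p: "p \<in> flesh Hf" and y: "y \<in> scope F p"
  have p_kept: "p \<notin> loss F \<phi>" using p leaf_fhybr_disjoint_loss unfolding flesh_def by blast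
  show "\<exists>x \<in> scope Hf p. shoot Hf x \<ggreater> shoot F y"
  proof (cases "\<exists>G \<in> \<phi>. y \<in> insert (zero (skel G)) (expl (skel F) (skel G))")
    case True
    then show ?thesis using fhybr_shoots_at_graft assms(3,4) p_kept y by blast
  next
    case False
    then have "y \<in> sp" "\<forall>S \<in> skel ` \<phi>. y \<noteq> zero S" using y unfolding scope_def supp_def by auto
    then show ?thesis using fhybr_shoots_at_supp assms(3) p_kept y by blast
  qed
qed

end
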